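(* Let $q$ be a prime power, $m,\eta,\ell,k\ge1$, $n=\ell\eta$, $\mu=\min\{m,\eta\}$, and integers $0\le w\le v\le\ell\mu$. Let $\alpha$ be a probability mass function on $\mathcal{W}(v,\ell,\mu)$ and let $\boldsymbol{\mathcal{F}}=\mathcal{F}_1\times\dots\times\mathcal{F}_\ell$ be drawn by first drawing $\mathbf{v}\sim\alpha$ and then each $\mathcal{F}_i$ independently and uniformly among the $v_i$-dimensional subspaces of $\mathbb{F}_q^\mu$. Let $\mathbf{y}\in\mathbb{F}_{q^m}^n$ be fixed, and let $\mathbf{c}_1,\dots,\mathbf{c}_{q^{mk}-1}$ be independent uniformly random vectors of $\mathbb{F}_{q^m}^n$ (the codewords of a random code other than the transmitted one), independent of $\boldsymbol{\mathcal{F}}$. Let $\mathcal{X}$ be the event that there exists $j$ such that $\mathrm{wt}_{\Sigma R}(\mathbf{y}-\mathbf{c}_j)=w$ and the support $\mathcal{E}'_1\times\dots\times\mathcal{E}'_\ell$ of $\mathbf{y}-\mathbf{c}_j$ satisfies $\mathcal{E}'_i\subseteq\mathcal{F}_i$ for all $i$. Then $$\Pr[\mathcal{X}]\le q^{m(k-n)}\sum_{\mathbf{w}\in\mathcal{W}(w,\ell,\mu)}\bar\varphi(\mathbf{w})\prod_{i=1}^{\ell}\mathrm{NM}_q(m,\eta,w_i),$$ where $\bar\varphi(\mathbf{w})\coloneqq\sum_{\mathbf{v}\in\mathcal{W}(v,\ell,\mu)}\alpha(\mathbf{v})\prod_{i=1}^{\ell}\Phi_\mu(w_i\subseteq v_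i)$.
   Context: Gaussian binomial: $\begin{bmatrix}a\\ b\end{bmatrix}_q=\prod_{i=0}^{b-1}\frac{q^{a-i}-1}{q^{b-i}-1}$. $\mathcal{W}(w,\ell,\mu)\coloneqq\{\mathbf{w}\in\{0,\dots,\mu\}^{\ell}:\sum_i w_i=w\}$. $\Phi_\mu(a\subseteq b)\coloneqq\begin{bmatrix}b\\ a\end{bmatrix}_q/\begin{bmatrix}\mu\\ a\end{bmatrix}_q$ if $a\le b$ and $0$ if $a>b$. $\mathrm{NM}_q(m,\eta,r)\coloneqq\prod_{j=0}^{r-1}\frac{(q^m-q^j)(q^\eta-q^j)}{q^r-q^j}$ (number of $m\times\eta$ matrices over $\mathbb{F}_q$ of rank $r$). A vector $\mathbf{x}\in\mathbb{F}_{q^m}^{n}$ is split into $\ell$ consecutive blocks of length $\eta$; via a fixed $\mathbb{F}_q$-basis of $\mathbb{F}_{q^m}$ each block is an $m\times\eta$ matrix over $\mathbb{F}_q$. The sum-rank weight $\mathrm{wt}_{\Sigma R}(\mathbf{x})$ is the sum of the ranks of these block matrices. The support of $\mathbf{x}$ is $\mathcal{E}_1\times\dots\times\mathcal{E}_\ell$, where $\mathcal{E}_i\subseteq\mathbb{F}_q^\mu$ is the row space of the $i$-th block matrix if $\eta\le m$ and its column space if $\eta>m$. *)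

theory Defs
  imports "HOL-Probability.Probability" "HOL-Library.Function_Algebras"
begin

(* Vectors of F_q^d are represented as functions nat => 'a that vanish outside {..<d}. *)
definition fscale :: "'a::field \<Rightarrow> (nat \<Rightarrow> 'a) \<Rightarrow> (nat \<Rightarrow> 'a)" where
  "fscale c v = (\<lambda>i. c * v i)"

interpretation fvs: vector_space "fscale :: 'a::field \<Rightarrow> (nat \<Rightarrow> 'a) \<Rightarrow> _"
  by unfold_locales (auto simp: fscale_def fun_eq_iff algebra_simps)

definition Fvec :: "nat \<Rightarrow> (nat \<Rightarrow> 'a::zero) set" where
  "Fvec d = {x. \<forall>i\<ge>d. x i = 0}"

definition Grass :: "nat \<Rightarrow> nat \<Rightarrow> (nat \<Rightarrow> 'a::field) set set" where
  "Grass mu d = {V. V \<subseteq> Fvec mu \<and> module.subspace fscale V \<and> vector_space.dim fscale V = d}"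

(* m x n matrices over F_q (the coordinate expansion of a vector of F_{q^m}^n w.r.t. a fixed basis);
   entry X r c, r < m, c < n; zero outside *)
definition Mats :: "nat \<Rightarrow> nat \<Rightarrow> (nat \<Rightarrow> nat \<Rightarrow> 'a::zero) set" where
  "Mats m n = {X. \<forall>r c. (m \<le> r \<or> n \<le> c) \<longrightarrow> X r c = 0}"

definition block_rows :: "nat \<Rightarrow> nat \<Rightarrow> (nat \<Rightarrow> nat \<Rightarrow> 'a::zero) \<Rightarrow> nat \<Rightarrow> (nat \<Rightarrow> 'a) set" where
  "block_rows m eta X i = (\<lambda>r. \<lambda>j. if j < eta then X r (i * eta + j) else 0) ` {..<m}"

definition block_cols :: "nat \<Rightarrow> nat \<Rightarrow> (nat \<Rightarrow> nat \<Rightarrow> 'a::zero) \<Rightarrow> nat \<Rightarrow> (nat \<Rightarrow> 'a) set" where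
  "block_cols m eta X i = (\<lambda>j. \<lambda>r. if r < m then X r (i * eta + j) else 0) ` {..<eta}"

definition block_rank :: "nat \<Rightarrow> nat \<Rightarrow> (nat \<Rightarrow> nat \<Rightarrow> 'a::field) \<Rightarrow> nat \<Rightarrow> nat" where
  "block_rank m eta X i = vector_space.dim fscale (block_rows m eta X i)"

definition wt_SR :: "nat \<Rightarrow> nat \<Rightarrow> nat \<Rightarrow> (nat \<Rightarrow> nat \<Rightarrow> 'a::field) \<Rightarrow> nat" where
  "wt_SR m eta l X = (\<Sum>i<l. block_rank m eta X i)"

definition supp_block :: "nat \<Rightarrow> nat \<Rightarrow> (nat \<Rightarrow> nat \<Rightarrow> 'a::field) \<Rightarrow> nat \<Rightarrow> (nat \<Rightarrow> 'a) set" where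
  "supp_block m eta X i =
     (if eta \<le> m then module.span fscale (block_rows m eta X i)
      else module.span fscale (block_cols m eta X i))"

definition Wset :: "nat \<Rightarrow> nat \<Rightarrow> nat \<Rightarrow> nat list set" where
  "Wset w l mu = {ws. length ws = l \<and> (\<forall>x\<in>set ws. x \<le> mu) \<and> sum_list ws = w}"

definition gauss_binom :: "nat \<Rightarrow> nat \<Rightarrow> nat \<Rightarrow> real" where
  "gauss_binom q a b = (\<Prod>i<b. (real q ^ (a - i) - 1) / (real q ^ (b - i) - 1))"

definition Phi :: "nat \<Rightarrow> nat \<Rightarrow> nat \<Rightarrow> nat \<Rightarrow> real" where
  "Phi q mu a b = (if a \<le> b then gauss_binom q b a / gauss_binom q mu a else 0)"

definition NM :: "nat \<Rightarrow> nat \<Rightarrow> nat \<Rightarrow> nat \<Rightarrow> real" where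
  "NM q m eta r = (\<Prod>j<r. (real q ^ m - real q ^ j) * (real q ^ eta - real q ^ j) / (real q ^ r - real q ^ j))"

fun seq_pmf :: "'b pmf list \<Rightarrow> 'b list pmf" where
  "seq_pmf [] = return_pmf []"
| "seq_pmf (p # ps) = do { x \<leftarrow> p; xs \<leftarrow> seq_pmf ps; return_pmf (x # xs) }"

definition exp_dist :: "nat list pmf \<Rightarrow> nat \<Rightarrow> nat \<Rightarrow> nat \<Rightarrow> nat \<Rightarrow>
     ((nat \<Rightarrow> 'a::{field,finite}) set list \<times> (nat \<Rightarrow> nat \<Rightarrow> 'a) list) pmf" where
  "exp_dist alpha mu m n N = do {
     vs \<leftarrow> alpha;
     Fs \<leftarrow> seq_pmf (map (\<lambda>d. pmf_of_set (Grass mu d)) vs);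
     cs \<leftarrow> seq_pmf (replicate N (pmf_of_set (Mats m n)));
     return_pmf (Fs, cs) }"

end

theory Submission
  imports Defs
begin

text \<open>Conditionally on the dimension vector and on the spaces \<open>\<F>\<^sub>i\<close>, the union bound over the
  \<open>q\<^sup>m\<^sup>k - 1\<close> independent uniform codewords, together with the bijection \<open>c \<mapsto> y - c\<close>, bounds the
  probability by \<open>(q\<^sup>m\<^sup>k - 1)/q\<^sup>m\<^sup>n\<close> times the number of errors \<open>E\<close> of sum-rank weight \<open>w\<close>
  whose support blocks lie in the \<open>\<F>\<^sub>i\<close>. Averaging over the \<open>\<F>\<^sub>i\<close>, a fixed \<open>w\<^sub>i\<close>-dimensional
  support block lies in a uniform \<open>v\<^sub>i\<close>-dimensional subspace with probability
  \<open>\<Phi>\<^sub>\<mu>(w\<^sub>i \<subseteq> v\<^sub>i)\<close> (count ordered bases extending a basis of the block), and the dimension of a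
  support block is the rank of the block (row rank equals column rank). Grouping the errors by
  their rank profile \<open>w\<close> and counting the matrices of each rank (\<open>NM\<close>, via the row-by-row
  recursion) gives the bound.\<close>

lemma bij_betw_restrict_Fvec:
  "bij_betw (\<lambda>x. restrict x {..<d}) (Fvec d :: (nat \<Rightarrow> 'a::zero) set) (PiE {..<d} (\<lambda>_. UNIV))"
  by (rule bij_betw_byWitness[where f' = "\<lambda>f i. if i < d then f i else 0"])
     (auto simp: Fvec_def fun_eq_iff PiE_def extensional_def)

lemma finite_Fvec: "finite (Fvec d :: (nat \<Rightarrow> 'a::{finite,zero}) set)"
  using bij_betw_finite[OF bij_betw_restrict_Fvec[where 'a='a, of d]] by (simp add: finite_PiE)

lemma card_Fvec: "card (Fvec d :: (nat \<Rightarrow> 'a::{finite,zero}) set) = CARD('a) ^ d"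
  using bij_betw_same_card[OF bij_betw_restrict_Fvec[where 'a='a, of d]] by (simp add: card_PiE)

lemma bij_betw_restrict_Mats:
  "bij_betw (\<lambda>X. restrict (case_prod X) ({..<m} \<times> {..<n})) (Mats m n :: (nat \<Rightarrow> nat \<Rightarrow> 'a::zero) set)
     (PiE ({..<m} \<times> {..<n}) (\<lambda>_. UNIV))"
  by (rule bij_betw_byWitness[where f' = "\<lambda>f r c. if r < m \<and> c < n then f (r, c) else 0"])
     (auto simp: Mats_def fun_eq_iff PiE_def extensional_def not_less)

lemma finite_Mats: "finite (Mats m n :: (nat \<Rightarrow> nat \<Rightarrow> 'a::{finite,zero}) set)"
  using bij_betw_finite[OF bij_betw_restrict_Mats[where 'a='a, of m n]] by (simp add: finite_PiE)

lemma card_Mats: "card (Mats m n :: (nat \<Rightarrow> nat \<Rightarrow> 'a::{finite,zero}) set) = CARD('a) ^ (m * n)"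
  using bij_betw_same_card[OF bij_betw_restrict_Mats[where 'a='a, of m n]] by (simp add: card_PiE)

lemma subspace_Fvec: "fvs.subspace (Fvec d :: (nat \<Rightarrow> 'a::field) set)"
  unfolding fvs.subspace_def Fvec_def fscale_def by auto

section \<open>Finite vector spaces\<close>

lemma one_less_card_field: "1 < CARD('a::{field,finite})"
proof -
  have "card {0::'a, 1} \<le> CARD('a)" by (rule card_mono) auto
  then show ?thesis by simp
qed

lemma card_span_independent:
  fixes B :: "(nat \<Rightarrow> 'a::{field,finite}) set"
  assumes fin: "finite B" and ind: "fvs.independent B"
  shows "card (fvs.span B) = CARD('a) ^ card B"
proof -
  let ?g = "\<lambda>u. \<Sum>v\<in>B. fscale (u v) v"
  have "fvs.span B = ?g ` PiE B (\<lambda>_. UNIV)"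
  proof -
    have "?g u \<in> ?g ` PiE B (\<lambda>_. UNIV)" for u
      by (rule image_eqI[of _ _ "restrict u B"]) (auto intro: sum.cong)
    then show ?thesis unfolding fvs.span_finite[OF fin] by auto
  qed
  moreover have "inj_on ?g (PiE B (\<lambda>_. UNIV))"
  proof (rule inj_onI)
    fix u u' assume u: "u \<in> PiE B (\<lambda>_. UNIV)" "u' \<in> PiE B (\<lambda>_. UNIV)" and eq: "?g u = ?g u'"
    have indep: "w v = 0" if "(\<Sum>v\<in>B. fscale (w v) v) = 0" "v \<in> B" for w v
      using ind that by (auto simp: fvs.dependent_finite[OF fin])
    have "(\<Sum>v\<in>B. fscale (u v - u' v) v) = 0"
      using eq by (simp add: fvs.scale_left_diff_distrib sum_subtractf)
    from indep[OF this] show "u = u'" by (intro PiE_ext[OF u]) simp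
  qed
  ultimately show ?thesis by (simp add: card_image card_PiE fin)
qed

lemma card_subspace:
  fixes V :: "(nat \<Rightarrow> 'a::{field,finite}) set"
  assumes "fvs.subspace V" "finite V"
  shows "card V = CARD('a) ^ fvs.dim V"
proof -
  obtain B where B: "B \<subseteq> V" "fvs.independent B" "V \<subseteq> fvs.span B" "card B = fvs.dim V"
    by (rule fvs.basis_exists)
  have "fvs.span B = V" using fvs.span_subspace[OF B(1) B(3) assms(1)] .
  then show ?thesis using card_span_independent[OF finite_subset[OF B(1) assms(2)] B(2)] B(4) by simp
qed

lemma dim_Fvec: "fvs.dim (Fvec d :: (nat \<Rightarrow> 'a::{field,finite}) set) = d"
proof -
  have "CARD('a) ^ fvs.dim (Fvec d :: (nat \<Rightarrow> 'a) set) = CARD('a) ^ d"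
    using card_subspace[OF subspace_Fvec finite_Fvec] card_Fvec by metis
  then show ?thesis using one_less_card_field[where 'a='a] by (simp add: power_inject_exp)
qed

lemma card_independent_le_dim:
  fixes B :: "(nat \<Rightarrow> 'a::field) set"
  assumes "fvs.independent B" "B \<subseteq> V" "finite V"
  shows "card B \<le> fvs.dim V"
proof -
  obtain C where C: "C \<subseteq> V" "V \<subseteq> fvs.span C" "card C = fvs.dim V"
    by (rule fvs.basis_exists)
  then show ?thesis
    using fvs.independent_span_bound[OF finite_subset[OF C(1) assms(3)] assms(1)] assms(2) by auto
qed

lemma dim_mono_finite:
  fixes S :: "(nat \<Rightarrow> 'a::field) set"
  assumes "S \<subseteq> V" "finite V"
  shows "fvs.dim S \<le> fvs.dim V"
proof -
  obtain B where "B \<subseteq> S" "fvs.independent B" "card B = fvs.dim S"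
    by (rule fvs.basis_exists)
  then show ?thesis using card_independent_le_dim[of B V] assms by auto
qed

lemma span_eq_if_card_eq_dim:
  fixes X :: "(nat \<Rightarrow> 'a::field) set"
  assumes F: "fvs.subspace F" "finite F"
    and X: "X \<subseteq> F" "fvs.independent X" "card X = fvs.dim F"
  shows "fvs.span X = F"
proof (rule ccontr)
  assume "fvs.span X \<noteq> F"
  with fvs.span_minimal[OF X(1) F(1)] obtain y where y: "y \<in> F" "y \<notin> fvs.span X" by blast
  have "fvs.independent (insert y X)" using fvs.independent_insertI[OF y(2) X(2)] .
  then have "card (insert y X) \<le> fvs.dim F" using y(1) X(1) F(2) by (intro card_independent_le_dim) auto
  moreover have "y \<notin> X" using y(2) fvs.span_superset by blast
  ultimately show False using finite_subset[OF X(1) F(2)] X(3) by simp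
qed

lemma dim_insert_finite:
  fixes S :: "(nat \<Rightarrow> 'a::field) set"
  assumes "finite S"
  shows "fvs.dim (insert x S) = (if x \<in> fvs.span S then fvs.dim S else Suc (fvs.dim S))"
proof (cases "x \<in> fvs.span S")
  case True
  then show ?thesis using fvs.span_redundant fvs.span_eq_dim by metis
next
  case False
  obtain B where B: "B \<subseteq> S" "fvs.independent B" "S \<subseteq> fvs.span B" "card B = fvs.dim S"
    by (rule fvs.basis_exists)
  have spB: "fvs.span B = fvs.span S"
    unfolding fvs.span_eq using B(1,3) fvs.span_superset by blast
  with False have xB: "x \<notin> fvs.span B" by simp
  have "fvs.dim (insert x S) = card (insert x B)"
    using fvs.dim_eq_card[OF _ fvs.independent_insertI[OF xB B(2)]] by (simp add: fvs.span_insert spB)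
  also have "\<dots> = Suc (card B)"
    using finite_subset[OF B(1) assms] xB fvs.span_superset by (auto simp: card_insert_if)
  finally show ?thesis using False B(4) by simp
qed

section \<open>Subspaces containing a given subspace\<close>

text \<open>Subspaces are counted through ordered bases: the extensions of a basis of \<open>E\<close> by \<open>v - w\<close>
  further vectors of \<open>Fvec mu\<close> are grouped by the \<open>v\<close>-dimensional space they span.\<close>

definition indep_extensions :: "(nat \<Rightarrow> 'a::field) set \<Rightarrow> (nat \<Rightarrow> 'a) list \<Rightarrow> nat \<Rightarrow> (nat \<Rightarrow> 'a) list set" where
  "indep_extensions V bs k =
     {cs. length cs = k \<and> set cs \<subseteq> V \<and> distinct (bs @ cs) \<and> fvs.independent (set (bs @ cs))}"

lemma finite_indep_extensions: "finite V \<Longrightarrow> finite (indep_extensions V bs k)"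
  by (rule finite_subset[OF _ finite_lists_length_eq[of V k]]) (auto simp: indep_extensions_def)

lemma indep_extensions_Suc:
  "indep_extensions V bs (Suc k) = (\<Union>x\<in>V - fvs.span (set bs). (#) x ` indep_extensions V (bs @ [x]) k)"
proof (intro equalityI subsetI)
  fix cs assume cs: "cs \<in> indep_extensions V bs (Suc k)"
  then obtain x cs' where c: "cs = x # cs'" by (cases cs) (auto simp: indep_extensions_def)
  have "x \<notin> fvs.span (set bs \<union> set cs')"
    using cs c fvs.independent_insert[of x "set bs \<union> set cs'"] by (auto simp: indep_extensions_def)
  then have "x \<notin> fvs.span (set bs)" using fvs.span_mono[of "set bs" "set bs \<union> set cs'"] by blast
  with cs c show "cs \<in> (\<Union>x\<in>V - fvs.span (set bs). (#) x ` indep_extensions V (bs @ [x]) k)"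
    by (auto simp: indep_extensions_def)
qed (auto simp: indep_extensions_def)

lemma card_indep_extensions:
  fixes V :: "(nat \<Rightarrow> 'a::{field,finite}) set"
  assumes V: "fvs.subspace V" "finite V"
    and bs: "set bs \<subseteq> V" "distinct bs" "fvs.independent (set bs)"
  shows "card (indep_extensions V bs k) = (\<Prod>i<k. CARD('a) ^ fvs.dim V - CARD('a) ^ (length bs + i))"
  using bs
proof (induction k arbitrary: bs)
  case 0
  then have "indep_extensions V bs 0 = {[]}" by (auto simp: indep_extensions_def)
  then show ?case by simp
next
  case (Suc k)
  let ?q = "CARD('a)" and ?d = "fvs.dim V"
  have sub: "fvs.span (set bs) \<subseteq> V" using fvs.span_minimal[OF Suc.prems(1) V(1)] .
  have "card (indep_extensions V (bs @ [x]) k) = (\<Prod>i<k. ?q ^ ?d - ?q ^ (Suc (length bs) + i))"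
    if x: "x \<in> V - fvs.span (set bs)" for x
  proof -
    have "x \<notin> set bs" using x fvs.span_superset by blast
    moreover have "fvs.independent (insert x (set bs))" using fvs.independent_insertI x Suc.prems(3) by blast
    ultimately show ?thesis using Suc.IH[of "bs @ [x]"] Suc.prems x by simp
  qed
  then have "card (indep_extensions V bs (Suc k))
      = card (V - fvs.span (set bs)) * (\<Prod>i<k. ?q ^ ?d - ?q ^ (Suc (length bs) + i))"
    unfolding indep_extensions_Suc
    by (subst card_UN_disjoint) (auto simp: finite_indep_extensions V(2) card_image)
  also have "card (V - fvs.span (set bs)) = ?q ^ ?d - ?q ^ length bs"
    using card_Diff_subset[OF finite_subset[OF sub V(2)] sub] card_subspace[OF V]
      card_span_independent[OF _ Suc.prems(3)] Suc.prems(2) by (simp add: distinct_card)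
  finally show ?case by (simp only: prod.lessThan_Suc_shift add_0_right add_Suc_shift)
qed

lemma finite_Grass: "finite (Grass mu v :: (nat \<Rightarrow> 'a::{field,finite}) set set)"
  by (rule finite_subset[of _ "Pow (Fvec mu)"]) (auto simp: Grass_def finite_Fvec)

lemma span_indep_extension_in_Grass:
  assumes "cs \<in> indep_extensions (Fvec mu) bs k" "set bs \<subseteq> Fvec mu"
  shows "fvs.span (set (bs @ cs)) \<in> Grass mu (length bs + k)"
proof -
  have cs: "distinct (bs @ cs)" "fvs.independent (set (bs @ cs))" "length cs = k" "set cs \<subseteq> Fvec mu"
    using assms(1) by (auto simp: indep_extensions_def)
  have "fvs.span (set (bs @ cs)) \<subseteq> Fvec mu"
    using cs(4) assms(2) by (intro fvs.span_minimal subspace_Fvec) auto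
  moreover have "fvs.dim (fvs.span (set (bs @ cs))) = length bs + k"
    using fvs.dim_span_eq_card_independent[OF cs(2)] distinct_card[OF cs(1)] cs(3) by simp
  ultimately show ?thesis by (simp add: Grass_def)
qed

lemma indep_extensions_spanning:
  fixes F :: "(nat \<Rightarrow> 'a::{field,finite}) set"
  assumes F: "F \<in> Grass mu (length bs + k)" and bs: "set bs \<subseteq> F"
  shows "{cs \<in> indep_extensions (Fvec mu) bs k. fvs.span (set (bs @ cs)) = F} = indep_extensions F bs k"
proof (intro equalityI subsetI)
  fix cs assume "cs \<in> {cs \<in> indep_extensions (Fvec mu) bs k. fvs.span (set (bs @ cs)) = F}"
  then show "cs \<in> indep_extensions F bs k"
    unfolding indep_extensions_def using fvs.span_superset by fastforce
next
  fix cs assume cs: "cs \<in> indep_extensions F bs k"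
  have F': "F \<subseteq> Fvec mu" "fvs.subspace F" "fvs.dim F = length bs + k" using F by (auto simp: Grass_def)
  have cs': "length cs = k" "set cs \<subseteq> F" "distinct (bs @ cs)" "fvs.independent (set (bs @ cs))"
    using cs by (auto simp: indep_extensions_def)
  have "fvs.span (set (bs @ cs)) = F"
    using cs' bs F' distinct_card[OF cs'(3)]
    by (intro span_eq_if_card_eq_dim finite_subset[OF F'(1) finite_Fvec]) auto
  with cs cs'(2) F'(1) show "cs \<in> {cs \<in> indep_extensions (Fvec mu) bs k. fvs.span (set (bs @ cs)) = F}"
    by (auto simp: indep_extensions_def)
qed

lemma card_Grass_supersets:
  fixes E :: "(nat \<Rightarrow> 'a::{field,finite}) set"
  assumes E: "fvs.subspace E" "E \<subseteq> Fvec mu" "fvs.dim E = w" and wv: "w \<le> v"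
  shows "card {F \<in> Grass mu v. E \<subseteq> F} * (\<Prod>i<v-w. CARD('a) ^ v - CARD('a) ^ (w + i))
       = (\<Prod>i<v-w. CARD('a) ^ mu - CARD('a) ^ (w + i))"
proof -
  obtain B where B: "B \<subseteq> E" "fvs.independent B" "E \<subseteq> fvs.span B" "card B = fvs.dim E"
    by (rule fvs.basis_exists)
  obtain bs where bs: "set bs = B" "distinct bs"
    using finite_distinct_list[OF finite_subset[OF B(1) finite_subset[OF E(2) finite_Fvec]]] by blast
  have len: "length bs = w" using bs B(4) E(3) distinct_card by metis
  have bsF: "set bs \<subseteq> Fvec mu" using bs B(1) E(2) by auto
  define L where "L = indep_extensions (Fvec mu) bs (v - w)"
  define T where "T = {F \<in> Grass mu v. E \<subseteq> F}"
  have span_in_T: "fvs.span (set (bs @ cs)) \<in> T" if "cs \<in> L" for cs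
    using span_indep_extension_in_Grass[OF that[unfolded L_def] bsF] B(3) bs(1) len wv
      fvs.span_mono[of "set bs" "set (bs @ cs)"] by (auto simp: T_def)
  have fibre: "card {cs \<in> L. fvs.span (set (bs @ cs)) = F} = (\<Prod>i<v-w. CARD('a) ^ v - CARD('a) ^ (w + i))"
    if F: "F \<in> T" for F
  proof -
    have F': "F \<in> Grass mu (length bs + (v - w))" "set bs \<subseteq> F"
      using F bs(1) B(1) len wv by (auto simp: T_def)
    then have F'': "fvs.subspace F" "finite F" "fvs.dim F = v"
      using len wv finite_subset[OF _ finite_Fvec] by (auto simp: Grass_def)
    show ?thesis unfolding L_def indep_extensions_spanning[OF F']
      using card_indep_extensions[OF F''(1,2) F'(2) bs(2)] bs(1) B(2) len F''(3) by simp
  qed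
  have "finite L" unfolding L_def by (rule finite_indep_extensions[OF finite_Fvec])
  moreover have "finite T" unfolding T_def by (rule finite_subset[OF _ finite_Grass]) auto
  ultimately have "card L = (\<Sum>F\<in>T. card {cs \<in> L. fvs.span (set (bs @ cs)) = F})"
    using sum.group[of L T "\<lambda>cs. fvs.span (set (bs @ cs))" "\<lambda>_. 1::nat"] span_in_T
    by (simp add: image_subset_iff)
  also have "\<dots> = card T * (\<Prod>i<v-w. CARD('a) ^ v - CARD('a) ^ (w + i))" using fibre by simp
  finally show ?thesis
    unfolding T_def[symmetric] L_def
    using card_indep_extensions[OF subspace_Fvec finite_Fvec bsF bs(2)] bs B(2) len by (simp add: dim_Fvec)
qed

text \<open>\<open>pow_diff_prod q a b c\<close> counts the ways to extend \<open>b\<close> independent vectors of an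
  \<open>a\<close>-dimensional space over \<open>\<bbbF>\<^sub>q\<close> by \<open>c\<close> further ones.\<close>

definition pow_diff_prod :: "real \<Rightarrow> nat \<Rightarrow> nat \<Rightarrow> nat \<Rightarrow> real" where
  "pow_diff_prod Q a b c = (\<Prod>i<c. Q ^ a - Q ^ (b + i))"

lemma pow_diff_prod_add:
  "pow_diff_prod Q a b (c + d) = pow_diff_prod Q a b c * pow_diff_prod Q a (b + c) d"
  unfolding pow_diff_prod_def by (induction d) (simp_all add: add.assoc mult.assoc)

lemma pow_diff_prod_pos: "1 < Q \<Longrightarrow> b + c \<le> a \<Longrightarrow> 0 < pow_diff_prod Q a b c"
  unfolding pow_diff_prod_def by (intro prod_pos) (simp add: power_strict_increasing)

lemma of_nat_prod_pow_diff:
  assumes "1 < q" "b + c \<le> a"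
  shows "real (\<Prod>i<c. q ^ a - q ^ (b + i)) = pow_diff_prod (real q) a b c"
proof -
  have "q ^ (b + i) \<le> q ^ a" if "i < c" for i
    using assms that by (intro power_increasing) auto
  then show ?thesis by (simp add: of_nat_diff pow_diff_prod_def)
qed

lemma real_card_Grass_supersets:
  fixes E :: "(nat \<Rightarrow> 'a::{field,finite}) set"
  assumes E: "fvs.subspace E" "E \<subseteq> Fvec mu" "fvs.dim E = w" and "w \<le> v" "v \<le> mu"
  shows "real (card {F \<in> Grass mu v. E \<subseteq> F})
       = pow_diff_prod (real CARD('a)) mu w (v - w) / pow_diff_prod (real CARD('a)) v w (v - w)"
proof -
  have q: "1 < CARD('a)" by (rule one_less_card_field)
  have "real (card {F \<in> Grass mu v. E \<subseteq> F}) * pow_diff_prod (real CARD('a)) v w (v - w)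
      = pow_diff_prod (real CARD('a)) mu w (v - w)"
    using arg_cong[OF card_Grass_supersets[OF E \<open>w \<le> v\<close>], of real] assms q
    by (simp only: of_nat_mult of_nat_prod_pow_diff)
  moreover have "0 < pow_diff_prod (real CARD('a)) v w (v - w)"
    using q \<open>w \<le> v\<close> by (intro pow_diff_prod_pos) auto
  ultimately show ?thesis by (simp add: eq_divide_eq)
qed

lemma real_card_Grass:
  assumes "v \<le> mu"
  shows "real (card (Grass mu v :: (nat \<Rightarrow> 'a::{field,finite}) set set))
       = pow_diff_prod (real CARD('a)) mu 0 v / pow_diff_prod (real CARD('a)) v 0 v"
proof -
  have "{F \<in> Grass mu v. fvs.span {} \<subseteq> F} = (Grass mu v :: (nat \<Rightarrow> 'a) set set)"
    by (auto simp: Grass_def fvs.subspace_0)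
  moreover have "fvs.dim (fvs.span {} :: (nat \<Rightarrow> 'a) set) = 0"
    unfolding fvs.dim_span using fvs.dim_eq_card_independent[OF fvs.independent_empty] by simp
  ultimately show ?thesis
    using real_card_Grass_supersets[where 'a='a, OF fvs.subspace_span _ _ zero_le assms, of "{}"]
    by (simp add: Fvec_def)
qed

lemma Grass_nonempty:
  assumes "v \<le> mu"
  shows "(Grass mu v :: (nat \<Rightarrow> 'a::{field,finite}) set set) \<noteq> {}"
proof -
  have "0 < pow_diff_prod (real CARD('a)) mu 0 v / pow_diff_prod (real CARD('a)) v 0 v"
    using assms one_less_card_field[where 'a='a] by (intro divide_pos_pos pow_diff_prod_pos) auto
  then show ?thesis using real_card_Grass[OF assms, where 'a='a] by auto
qed

lemma Phi_eq_pow_diff_prod: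
  assumes q: "1 < q" and "w \<le> v" "v \<le> mu"
  shows "Phi q mu w v = pow_diff_prod (real q) v 0 w / pow_diff_prod (real q) mu 0 w"
proof -
  have factor: "real q ^ a - real q ^ i = real q ^ i * (real q ^ (a - i) - 1)" if "i \<le> a" for a i
    using that by (simp add: algebra_simps flip: power_add)
  have "0 < (\<Prod>i<w. real q ^ (w - i) - 1)"
  proof (rule prod_pos)
    fix i assume "i \<in> {..<w}"
    then have "1 < real q ^ (w - i)" using q by (intro one_less_power) auto
    then show "0 < real q ^ (w - i) - 1" by simp
  qed
  then have "(\<Prod>i<w. real q ^ (w - i) - 1) \<noteq> 0" by linarith
  then show ?thesis
    using assms unfolding Phi_def gauss_binom_def pow_diff_prod_def
    by (simp add: factor prod.distrib prod_dividef)
qed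

lemma Phi_nonneg: "1 \<le> q \<Longrightarrow> 0 \<le> Phi q mu a b"
  unfolding Phi_def gauss_binom_def
  by (auto intro!: divide_nonneg_nonneg prod_nonneg simp: one_le_power)

lemma prob_Grass_supersets:
  fixes E :: "(nat \<Rightarrow> 'a::{field,finite}) set"
  assumes E: "fvs.subspace E" "E \<subseteq> Fvec mu" "fvs.dim E = w" and vm: "v \<le> mu"
  shows "measure_pmf.prob (pmf_of_set (Grass mu v)) {F. E \<subseteq> F} = Phi CARD('a) mu w v"
proof -
  let ?G = "Grass mu v :: (nat \<Rightarrow> 'a) set set" and ?P = "pow_diff_prod (real CARD('a))"
  have q: "1 < CARD('a)" by (rule one_less_card_field)
  have prob: "measure_pmf.prob (pmf_of_set ?G) {F. E \<subseteq> F} = real (card {F \<in> ?G. E \<subseteq> F}) / real (card ?G)"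
    using measure_pmf_of_set[OF Grass_nonempty[OF vm] finite_Grass, of "{F. E \<subseteq> F}"]
    by (simp add: Int_def conj_commute)
  show ?thesis
  proof (cases "w \<le> v")
    case False
    have "fvs.dim E \<le> fvs.dim F" if "F \<in> ?G" "E \<subseteq> F" for F
      using that by (intro dim_mono_finite) (auto simp: Grass_def intro: finite_subset[OF _ finite_Fvec])
    then have "{F \<in> ?G. E \<subseteq> F} = {}" using False E(3) by (force simp: Grass_def)
    then have "card {F \<in> ?G. E \<subseteq> F} = 0" by (simp only: card.empty)
    then show ?thesis using prob False by (simp add: Phi_def)
  next
    case wv: True
    have split: "?P a 0 v = ?P a 0 w * ?P a w (v - w)" for a
      using pow_diff_prod_add[of _ a 0 w "v - w"] wv by simp
    have "0 < ?P v w (v - w)" "0 < ?P mu w (v - w)" "0 < ?P v 0 w" "0 < ?P mu 0 w"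
      using wv vm q by (auto intro!: pow_diff_prod_pos)
    then have "real (card {F \<in> ?G. E \<subseteq> F}) / real (card ?G) = ?P v 0 w / ?P mu 0 w"
      unfolding real_card_Grass_supersets[OF E wv vm] real_card_Grass[OF vm] split
      by (simp add: field_simps)
    then show ?thesis using prob Phi_eq_pow_diff_prod[OF q wv vm] by simp
  qed
qed

section \<open>Rank and supports of blocks\<close>

definition row_space :: "nat \<Rightarrow> nat \<Rightarrow> (nat \<Rightarrow> nat \<Rightarrow> 'a::zero) \<Rightarrow> (nat \<Rightarrow> 'a) set" where
  "row_space m n X = (\<lambda>r j. if j < n then X r j else 0) ` {..<m}"

lemma finite_row_space: "finite (row_space m n X)"
  by (simp add: row_space_def)

lemma card_row_space_le: "card (row_space m n X) \<le> m"
  using card_image_le[of "{..<m}"] by (simp add: row_space_def)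

lemma row_space_subset_Fvec: "row_space m n X \<subseteq> Fvec n"
  by (auto simp: row_space_def Fvec_def)

lemma sum_apply_fun: "(\<Sum>b\<in>B. f b) j = (\<Sum>b\<in>B. f b j)" for f :: "'b \<Rightarrow> nat \<Rightarrow> 'a::comm_monoid_add"
  by (induction B rule: infinite_finite_induct) auto

text \<open>Expanding the columns in a basis of the column space writes every row as a combination
  of \<open>dim\<close> fixed vectors.\<close>

lemma dim_row_space_le_transpose:
  fixes X :: "nat \<Rightarrow> nat \<Rightarrow> 'a::field"
  shows "fvs.dim (row_space m n X) \<le> fvs.dim (row_space n m (\<lambda>r c. X c r))"
proof -
  let ?C = "row_space n m (\<lambda>r c. X c r)"
  obtain B where B: "B \<subseteq> ?C" "?C \<subseteq> fvs.span B" "card B = fvs.dim ?C"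
    by (rule fvs.basis_exists)
  have fB: "finite B" using B(1) finite_row_space by (rule finite_subset)
  define col where "col j = (\<lambda>r. if r < m then X r j else 0)" for j
  have "\<exists>u. col j = (\<Sum>b\<in>B. fscale (u b) b)" if "j < n" for j
  proof -
    have "col j \<in> ?C" using that by (auto simp: row_space_def col_def)
    then show ?thesis using B(2) unfolding fvs.span_finite[OF fB] by auto
  qed
  then obtain a where a: "\<And>j. j < n \<Longrightarrow> col j = (\<Sum>b\<in>B. fscale (a j b) b)" by metis
  define u where "u b = (\<lambda>j. if j < n then a j b else 0)" for b
  have row: "(\<lambda>j. if j < n then X r j else 0) = (\<Sum>b\<in>B. fscale (b r) (u b))" if r: "r < m" for r
  proof
    fix j
    have "X r j = (\<Sum>b\<in>B. a j b * b r)" if "j < n"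
    proof -
      have "X r j = col j r" using r by (simp add: col_def)
      also have "\<dots> = (\<Sum>b\<in>B. a j b * b r)" using a[OF that] by (simp add: sum_apply_fun fscale_def)
      finally show ?thesis .
    qed
    then show "(if j < n then X r j else 0) = (\<Sum>b\<in>B. fscale (b r) (u b)) j"
      by (simp add: sum_apply_fun fscale_def u_def mult.commute)
  qed
  have "row_space m n X \<subseteq> fvs.span (u ` B)"
  proof
    fix x assume "x \<in> row_space m n X"
    then obtain r where "r < m" "x = (\<lambda>j. if j < n then X r j else 0)" by (auto simp: row_space_def)
    then show "x \<in> fvs.span (u ` B)"
      using row by (simp add: fvs.span_sum fvs.span_scale fvs.span_base)
  qed
  then have "fvs.dim (row_space m n X) \<le> card (u ` B)" using fB by (intro fvs.dim_le_card) auto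
  also have "\<dots> \<le> card B" using fB by (rule card_image_le)
  finally show ?thesis using B(3) by simp
qed

lemma dim_row_space_transpose:
  fixes X :: "nat \<Rightarrow> nat \<Rightarrow> 'a::field"
  shows "fvs.dim (row_space m n X) = fvs.dim (row_space n m (\<lambda>r c. X c r))"
  using dim_row_space_le_transpose[of m n X] dim_row_space_le_transpose[of n m "\<lambda>r c. X c r"] by simp

lemma block_rows_eq_row_space: "block_rows m eta X i = row_space m eta (\<lambda>r c. X r (i * eta + c))"
  by (simp add: block_rows_def row_space_def)

lemma block_cols_eq_row_space: "block_cols m eta X i = row_space eta m (\<lambda>c r. X r (i * eta + c))"
  by (simp add: block_cols_def row_space_def)

lemma dim_block_cols: "fvs.dim (block_cols m eta X i) = block_rank m eta (X :: nat \<Rightarrow> nat \<Rightarrow> 'a::field) i"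
  unfolding block_cols_eq_row_space block_rank_def block_rows_eq_row_space
  using dim_row_space_transpose[of m eta "\<lambda>r c. X r (i * eta + c)"] by simp

lemma subspace_supp_block: "fvs.subspace (supp_block m eta X i)"
  by (simp add: supp_block_def)

lemma span_row_space_subset_Fvec: "fvs.span (row_space m n X) \<subseteq> Fvec n"
  by (rule fvs.span_minimal[OF row_space_subset_Fvec subspace_Fvec])

lemma supp_block_subset_Fvec: "supp_block m eta X i \<subseteq> Fvec (min m eta)"
  unfolding supp_block_def block_rows_eq_row_space block_cols_eq_row_space
  by (simp add: min_def span_row_space_subset_Fvec)

lemma dim_supp_block: "fvs.dim (supp_block m eta X i) = block_rank m eta X i"
  by (simp add: supp_block_def block_rank_def dim_block_cols[unfolded block_rank_def])

lemma block_rank_le_min: "block_rank m eta X i \<le> min m eta"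
proof -
  have "block_rank m eta X i \<le> m"
    unfolding block_rank_def block_rows_eq_row_space
    by (rule order.trans[OF fvs.dim_le_card'[OF finite_row_space] card_row_space_le])
  moreover have "block_rank m eta X i \<le> eta"
    unfolding dim_block_cols[symmetric] block_cols_eq_row_space
    by (rule order.trans[OF fvs.dim_le_card'[OF finite_row_space] card_row_space_le])
  ultimately show ?thesis by simp
qed

section \<open>Counting matrices of given rank\<close>

lemma NM_eq_pow_diff_prod:
  "NM q m eta r = pow_diff_prod (real q) eta 0 r * pow_diff_prod (real q) m 0 r / pow_diff_prod (real q) r 0 r"
  unfolding NM_def pow_diff_prod_def by (simp add: prod_dividef prod.distrib)

lemma NM_eq_0: "eta < r \<Longrightarrow> NM q m eta r = 0"
  by (auto simp: NM_def prod_zero_iff)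

lemma pow_diff_prod_Suc_Suc: "pow_diff_prod Q (Suc a) 0 (Suc r) = (Q ^ Suc a - 1) * Q ^ r * pow_diff_prod Q a 0 r"
proof -
  have "pow_diff_prod Q (Suc a) 0 (Suc r) = (Q ^ Suc a - 1) * (\<Prod>j<r. Q * (Q ^ a - Q ^ j))"
    unfolding pow_diff_prod_def prod.lessThan_Suc_shift by (simp add: algebra_simps)
  then show ?thesis by (simp add: prod.distrib pow_diff_prod_def)
qed

text \<open>The recursion of \<open>NM\<close> in the number of rows: a new row either lies in the row space of the
  others or raises the rank by one.\<close>

lemma NM_Suc_Suc:
  assumes q: "1 < q"
  shows "NM q (Suc t) e (Suc r) = real q ^ Suc r * NM q t e (Suc r) + (real q ^ e - real q ^ r) * NM q t e r"
proof -
  let ?P = "pow_diff_prod (real q)" and ?Q = "real q"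
  have pos: "0 < ?P r 0 r" "0 < ?Q ^ r" "0 < ?Q * ?Q ^ r - 1"
    using q one_less_power[of ?Q "Suc r"] by (auto intro: pow_diff_prod_pos)
  have Suc_r: "?P a 0 (Suc r) = ?P a 0 r * (?Q ^ a - ?Q ^ r)" for a
    using pow_diff_prod_add[of ?Q a 0 r 1] by (simp add: pow_diff_prod_def)
  show ?thesis
    unfolding NM_eq_pow_diff_prod pow_diff_prod_Suc_Suc Suc_r
    using pos by (simp add: field_simps)
qed

lemma card_rank_insert:
  fixes R :: "(nat \<Rightarrow> 'a::{field,finite}) set"
  assumes R: "finite R" "R \<subseteq> Fvec e"
  shows "card {x \<in> Fvec e. fvs.dim (insert x R) = r} =
    (if fvs.dim R = r then CARD('a) ^ r else 0)
    + (if Suc (fvs.dim R) = r then CARD('a) ^ e - CARD('a) ^ fvs.dim R else 0)"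
proof -
  let ?s = "fvs.dim R"
  have sub: "fvs.span R \<subseteq> Fvec e" using fvs.span_minimal[OF R(2) subspace_Fvec] .
  have fin: "finite (fvs.span R)" using sub finite_Fvec by (rule finite_subset)
  have card_span: "card (fvs.span R) = CARD('a) ^ ?s"
    using card_subspace[OF fvs.subspace_span fin] by simp
  have "{x \<in> Fvec e. fvs.dim (insert x R) = r} =
      (if ?s = r then fvs.span R else {}) \<union> (if Suc ?s = r then Fvec e - fvs.span R else {})"
    using sub dim_insert_finite[OF R(1)] by auto
  then show ?thesis
    using card_span card_Diff_subset[OF fin sub] card_Fvec[where 'a='a] by simp
qed

definition append_row :: "nat \<Rightarrow> (nat \<Rightarrow> nat \<Rightarrow> 'a) \<times> (nat \<Rightarrow> 'a) \<Rightarrow> nat \<Rightarrow> nat \<Rightarrow> 'a" where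
  "append_row t p = (\<lambda>i c. if i = t then snd p c else fst p i c)"

lemma bij_betw_append_row:
  "bij_betw (append_row t) (Mats t e \<times> Fvec e) (Mats (Suc t) e :: (nat \<Rightarrow> nat \<Rightarrow> 'a::zero) set)"
  by (rule bij_betw_byWitness[where f' = "\<lambda>X. (\<lambda>i c. if i < t then X i c else 0, X t)"])
     (auto simp: append_row_def Mats_def Fvec_def fun_eq_iff not_less_eq_eq)

lemma row_space_append_row:
  assumes "Y \<in> Mats t e" "x \<in> Fvec e"
  shows "row_space (Suc t) e (append_row t (Y, x)) = insert x (row_space t e Y)"
proof -
  have "(\<lambda>j. if j < e then append_row t (Y, x) t j else 0) = x"
    using assms(2) by (auto simp: Fvec_def fun_eq_iff append_row_def)
  moreover have "(\<lambda>i j. if j < e then append_row t (Y, x) i j else 0) ` {..<t} = row_space t e Y"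
    unfolding row_space_def by (intro image_cong refl) (auto simp: append_row_def)
  ultimately show ?thesis by (simp add: row_space_def lessThan_Suc)
qed

lemma card_Collect_bij_betw:
  assumes "bij_betw f A B"
  shows "card {b \<in> B. P b} = card {a \<in> A. P (f a)}"
proof -
  have "bij_betw f {a \<in> A. P (f a)} {b \<in> B. P b}"
    using assms unfolding bij_betw_def by (auto intro: inj_on_subset)
  then show ?thesis by (simp add: bij_betw_same_card)
qed

lemma card_Mats_rank_Suc:
  fixes e t r :: nat
  defines "C \<equiv> \<lambda>t r. card {X \<in> (Mats t e :: (nat \<Rightarrow> nat \<Rightarrow> 'a::{field,finite}) set). fvs.dim (row_space t e X) = r}"
  shows "C (Suc t) r = CARD('a) ^ r * C t r
     + (case r of 0 \<Rightarrow> 0 | Suc r' \<Rightarrow> (CARD('a) ^ e - CARD('a) ^ r') * C t r')"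
proof -
  let ?M = "Mats t e :: (nat \<Rightarrow> nat \<Rightarrow> 'a) set"
  let ?good = "\<lambda>X. fvs.dim (row_space (Suc t) e X) = r"
  have "{p \<in> ?M \<times> Fvec e. ?good (append_row t p)}
      = (SIGMA Y:?M. {x \<in> Fvec e. fvs.dim (insert x (row_space t e Y)) = r})"
    by (auto simp: row_space_append_row)
  then have "C (Suc t) r = card (SIGMA Y:?M. {x \<in> Fvec e. fvs.dim (insert x (row_space t e Y)) = r})"
    unfolding C_def card_Collect_bij_betw[OF bij_betw_append_row] by simp
  also have "\<dots> = (\<Sum>Y\<in>?M. card {x \<in> Fvec e. fvs.dim (insert x (row_space t e Y)) = r})"
    by (rule card_SigmaI) (auto simp: finite_Mats finite_Fvec)
  also have "\<dots> = (\<Sum>Y\<in>?M. (if fvs.dim (row_space t e Y) = r then CARD('a) ^ r else 0)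
       + (if Suc (fvs.dim (row_space t e Y)) = r then CARD('a) ^ e - CARD('a) ^ (r - 1) else 0))"
    by (intro sum.cong refl) (auto simp: card_rank_insert[OF finite_row_space row_space_subset_Fvec])
  also have "\<dots> = CARD('a) ^ r * C t r
       + card {Y \<in> ?M. Suc (fvs.dim (row_space t e Y)) = r} * (CARD('a) ^ e - CARD('a) ^ (r - 1))"
    by (simp add: sum.distrib sum.If_cases finite_Mats C_def Int_def conj_commute)
  finally show ?thesis by (cases r) (auto simp: C_def)
qed

lemma real_card_Mats_rank:
  "real (card {X \<in> (Mats t e :: (nat \<Rightarrow> nat \<Rightarrow> 'a::{field,finite}) set). fvs.dim (row_space t e X) = r})
   = NM CARD('a) t e r"
proof (induction t arbitrary: r)
  case 0
  have "(Mats 0 e :: (nat \<Rightarrow> nat \<Rightarrow> 'a) set) = {\<lambda>_ _. 0}" by (auto simp: Mats_def fun_eq_iff)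
  moreover have "fvs.dim (row_space 0 e X) = 0" for X :: "nat \<Rightarrow> nat \<Rightarrow> 'a"
    using fvs.dim_eq_card_independent[OF fvs.independent_empty] by (simp add: row_space_def)
  moreover have "NM q 0 e (Suc r') = 0" for q r'
    unfolding NM_def prod.lessThan_Suc_shift by simp
  moreover have "NM q t e 0 = 1" for q t by (simp add: NM_def)
  ultimately show ?case by (cases r) simp_all
next
  case (Suc t)
  let ?q = "CARD('a)"
  have q: "1 < ?q" by (rule one_less_card_field)
  show ?case
  proof (cases r)
    case 0
    then show ?thesis using card_Mats_rank_Suc[of t e 0, where 'a='a] Suc.IH[of 0] by (simp add: NM_def)
  next
    case (Suc r')
    have "real (?q ^ e - ?q ^ r') * NM ?q t e r' = (real ?q ^ e - real ?q ^ r') * NM ?q t e r'"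
    proof (cases "r' \<le> e")
      case True
      then have "?q ^ r' \<le> ?q ^ e" using q by (intro power_increasing) auto
      then show ?thesis by (simp add: of_nat_diff)
    qed (simp add: NM_eq_0)
    then show ?thesis
      using card_Mats_rank_Suc[of t e r, where 'a='a] Suc.IH[of r] Suc.IH[of r'] Suc NM_Suc_Suc[OF q, of t e r']
      by simp
  qed
qed

section \<open>Products of distributions and the union bound\<close>

lemma prob_bind_pmf: "measure_pmf.prob (bind_pmf M f) A = (\<integral>x. measure_pmf.prob (f x) A \<partial>M)"
  unfolding measure_pmf_bind
  by (rule measure_pmf.measure_bind[where N="count_space UNIV"])
     (auto simp: space_subprob_algebra measure_pmf.subprob_space_axioms)

lemma integrable_bounded_pmf: "(\<And>x. \<bar>f x\<bar> \<le> B) \<Longrightarrow> integrable (measure_pmf p) (f :: _ \<Rightarrow> real)"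
  by (intro measure_pmf.integrable_const_bound[where B=B]) auto

lemma prob_bind_pmf_le:
  assumes "\<And>x. x \<in> set_pmf p \<Longrightarrow> measure_pmf.prob (f x) A \<le> g x" and "integrable p g"
  shows "measure_pmf.prob (bind_pmf p f) A \<le> (\<integral>x. g x \<partial>p)"
  unfolding prob_bind_pmf
  by (rule integral_mono_AE[OF integrable_bounded_pmf[where B=1] assms(2)])
     (auto simp: AE_measure_pmf_iff assms(1))

lemma seq_pmf_Cons: "seq_pmf (p # ps) = bind_pmf p (\<lambda>x. map_pmf ((#) x) (seq_pmf ps))"
  by (simp add: map_pmf_def)

lemma length_of_set_seq_pmf: "xs \<in> set_pmf (seq_pmf ps) \<Longrightarrow> length xs = length ps"
  by (induction ps arbitrary: xs) auto

lemma prob_seq_pmf_componentwise: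
  "length ps = n \<Longrightarrow>
   measure_pmf.prob (seq_pmf ps) {xs. \<forall>i<n. xs ! i \<in> A i} = (\<Prod>i<n. measure_pmf.prob (ps ! i) (A i))"
proof (induction ps arbitrary: n A)
  case (Cons p ps)
  then obtain n' where n: "n = Suc n'" "length ps = n'" by auto
  let ?c = "measure_pmf.prob (seq_pmf ps) {xs. \<forall>i<n'. xs ! i \<in> A (Suc i)}"
  have "(#) x -` {xs. \<forall>i<n. xs ! i \<in> A i} = (if x \<in> A 0 then {xs. \<forall>i<n'. xs ! i \<in> A (Suc i)} else {})" for x
    using n(1) by (auto simp: less_Suc_eq_0_disj)
  then have "measure_pmf.prob (seq_pmf (p # ps)) {xs. \<forall>i<n. xs ! i \<in> A i}
      = (\<integral>x. ?c * indicator (A 0) x \<partial>measure_pmf p)"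
    unfolding seq_pmf_Cons prob_bind_pmf measure_map_pmf
    by (intro Bochner_Integration.integral_cong refl) (simp add: indicator_def)
  also have "\<dots> = ?c * measure_pmf.prob p (A 0)" by simp
  also have "\<dots> = measure_pmf.prob p (A 0) * (\<Prod>i<n'. measure_pmf.prob (ps ! i) (A (Suc i)))"
    unfolding Cons.IH[OF n(2)] by (rule mult.commute)
  finally show ?case unfolding n(1) prod.lessThan_Suc_shift nth_Cons_0 nth_Cons_Suc .
qed simp

lemma prob_seq_pmf_replicate_exists_le:
  "measure_pmf.prob (seq_pmf (replicate N p)) {cs. \<exists>j<length cs. cs ! j \<in> B} \<le> real N * measure_pmf.prob p B"
proof -
  let ?P = "seq_pmf (replicate N p)"
  define A where "A j = {cs. \<forall>i<N. cs ! i \<in> (if i = j then B else UNIV)}" for j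
  have "{cs. \<exists>j<length cs. cs ! j \<in> B} \<inter> set_pmf ?P \<subseteq> (\<Union>j<N. A j)"
  proof
    fix cs assume "cs \<in> {cs. \<exists>j<length cs. cs ! j \<in> B} \<inter> set_pmf ?P"
    then have "\<exists>j<length cs. cs ! j \<in> B" and "length cs = N"
      using length_of_set_seq_pmf[of cs "replicate N p"] by auto
    then obtain j where j: "j < N" "cs ! j \<in> B" by blast
    have "cs \<in> A j" using j by (simp add: A_def)
    with j(1) show "cs \<in> (\<Union>j<N. A j)" by blast
  qed
  then have "measure_pmf.prob ?P ({cs. \<exists>j<length cs. cs ! j \<in> B} \<inter> set_pmf ?P)
      \<le> measure_pmf.prob ?P (\<Union>j<N. A j)"
    by (rule measure_pmf.finite_measure_mono) simp
  also have "\<dots> \<le> (\<Sum>j<N. measure_pmf.prob ?P (A j))"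
    by (rule measure_pmf.finite_measure_subadditive_finite) simp_all
  also have "\<dots> = (\<Sum>j<N. measure_pmf.prob p B)"
  proof (intro sum.cong refl)
    fix j assume "j \<in> {..<N}"
    moreover have "(\<Prod>i<N. measure_pmf.prob (replicate N p ! i) (if i = j then B else UNIV))
        = (\<Prod>i<N. if i = j then measure_pmf.prob p B else 1)" by (intro prod.cong) auto
    ultimately show "measure_pmf.prob ?P (A j) = measure_pmf.prob p B"
      unfolding A_def prob_seq_pmf_componentwise[OF length_replicate] by simp
  qed
  finally show ?thesis by (simp add: measure_Int_set_pmf)
qed

definition rank_profile :: "nat \<Rightarrow> nat \<Rightarrow> nat \<Rightarrow> (nat \<Rightarrow> nat \<Rightarrow> 'a::field) \<Rightarrow> nat list" where
  "rank_profile m eta l E = map (block_rank m eta E) [0..<l]"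

lemma finite_Wset: "finite (Wset w l mu)"
  by (rule finite_subset[OF _ finite_lists_length_eq[of "{..mu}" l]]) (auto simp: Wset_def)

lemma rank_profile_in_Wset:
  "wt_SR m eta l E = w \<Longrightarrow> rank_profile m eta l E \<in> Wset w l (min m eta)"
  using block_rank_le_min[of m eta E] unfolding Wset_def rank_profile_def wt_SR_def
  by (auto simp: sum_list_sum_nth atLeast0LessThan)

definition block_matrix :: "nat \<Rightarrow> nat \<Rightarrow> nat \<Rightarrow> (nat \<Rightarrow> nat \<Rightarrow> 'a::zero) \<Rightarrow> nat \<Rightarrow> nat \<Rightarrow> 'a" where
  "block_matrix m eta i E = (\<lambda>r c. if r < m \<and> c < eta then E r (i * eta + c) else 0)"

lemma block_rank_eq_dim_block_matrix:
  "block_rank m eta E i = fvs.dim (row_space m eta (block_matrix m eta i E))"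
proof -
  have "row_space m eta (block_matrix m eta i E) = row_space m eta (\<lambda>r c. E r (i * eta + c))"
    unfolding row_space_def by (intro image_cong refl) (auto simp: block_matrix_def)
  then show ?thesis by (simp add: block_rank_def block_rows_eq_row_space)
qed

lemma inj_on_blocks:
  "inj_on (\<lambda>E. \<lambda>i\<in>{..<l}. block_matrix m eta i E) (Mats m (l * eta) :: (nat \<Rightarrow> nat \<Rightarrow> 'a::zero) set)"
proof (rule inj_onI, intro ext)
  fix E E' r c
  assume E: "E \<in> Mats m (l * eta)" "E' \<in> Mats m (l * eta)"
    and eq: "(\<lambda>i\<in>{..<l}. block_matrix m eta i E) = (\<lambda>i\<in>{..<l}. block_matrix m eta i E')"
  show "E r c = E' r c"
  proof (cases "r < m \<and> c < l * eta")
    case True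
    then have "0 < eta" by (cases eta) auto
    with True have "c div eta < l" "c mod eta < eta" by (auto simp: less_mult_imp_div_less)
    then show ?thesis using fun_cong[OF fun_cong[OF fun_cong[OF eq, of "c div eta"], of r], of "c mod eta"] True
      by (simp add: block_matrix_def)
  qed (use E in \<open>auto simp: Mats_def not_less\<close>)
qed

lemma card_rank_profile_le:
  "real (card {E \<in> (Mats m (l * eta) :: (nat \<Rightarrow> nat \<Rightarrow> 'a::{field,finite}) set). rank_profile m eta l E = ws})
   \<le> (\<Prod>i<l. NM CARD('a) m eta (ws ! i))"
proof -
  let ?R = "\<lambda>r. {X \<in> (Mats m eta :: (nat \<Rightarrow> nat \<Rightarrow> 'a) set). fvs.dim (row_space m eta X) = r}"
  let ?A = "{E \<in> (Mats m (l * eta) :: (nat \<Rightarrow> nat \<Rightarrow> 'a) set). rank_profile m eta l E = ws}"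
  have "block_matrix m eta i E \<in> ?R (block_rank m eta E i)" for i E
    by (simp add: block_matrix_def Mats_def block_rank_eq_dim_block_matrix)
  then have "(\<lambda>E. \<lambda>i\<in>{..<l}. block_matrix m eta i E) ` ?A \<subseteq> PiE {..<l} (\<lambda>i. ?R (ws ! i))"
    by (auto simp: rank_profile_def)
  moreover have "finite (PiE {..<l} (\<lambda>i. ?R (ws ! i)))"
    using finite_Mats[of m eta, where 'a='a] by (intro finite_PiE) auto
  ultimately have "card ?A \<le> card (PiE {..<l} (\<lambda>i. ?R (ws ! i)))"
    by (intro card_inj_on_le[OF inj_on_subset[OF inj_on_blocks]]) auto
  then have "real (card ?A) \<le> real (\<Prod>i<l. card (?R (ws ! i)))"
    by (simp add: card_PiE del: of_nat_prod)
  also have "\<dots> = (\<Prod>i<l. NM CARD('a) m eta (ws ! i))" by (simp add: real_card_Mats_rank)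
  finally show ?thesis .
qed

lemma sum_weight_class_le:
  fixes f :: "nat list \<Rightarrow> real"
  assumes "\<And>ws. ws \<in> Wset w l (min m eta) \<Longrightarrow> 0 \<le> f ws"
  shows "(\<Sum>E\<in>{E \<in> (Mats m (l * eta) :: (nat \<Rightarrow> nat \<Rightarrow> 'a::{field,finite}) set). wt_SR m eta l E = w}.
            f (rank_profile m eta l E))
         \<le> (\<Sum>ws\<in>Wset w l (min m eta). f ws * (\<Prod>i<l. NM CARD('a) m eta (ws ! i)))"
proof -
  let ?Mw = "{E \<in> (Mats m (l * eta) :: (nat \<Rightarrow> nat \<Rightarrow> 'a) set). wt_SR m eta l E = w}"
  have "(\<Sum>E\<in>?Mw. f (rank_profile m eta l E))
      = (\<Sum>ws\<in>Wset w l (min m eta). \<Sum>E\<in>{E \<in> ?Mw. rank_profile m eta l E = ws}. f (rank_profile m eta l E))"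
    by (rule sum.group[symmetric]) (auto simp: finite_Mats finite_Wset rank_profile_in_Wset)
  also have "\<dots> = (\<Sum>ws\<in>Wset w l (min m eta). f ws * real (card {E \<in> ?Mw. rank_profile m eta l E = ws}))"
    by (simp add: mult.commute)
  also have "\<dots> \<le> (\<Sum>ws\<in>Wset w l (min m eta). f ws * (\<Prod>i<l. NM CARD('a) m eta (ws ! i)))"
  proof (intro sum_mono mult_left_mono assms)
    fix ws
    have "card {E \<in> ?Mw. rank_profile m eta l E = ws}
        \<le> card {E \<in> (Mats m (l * eta) :: (nat \<Rightarrow> nat \<Rightarrow> 'a) set). rank_profile m eta l E = ws}"
      by (intro card_mono) (auto simp: finite_Mats)
    then show "real (card {E \<in> ?Mw. rank_profile m eta l E = ws}) \<le> (\<Prod>i<l. NM CARD('a) m eta (ws ! i))"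
      using card_rank_profile_le[of m l eta ws, where 'a='a] by linarith
  qed
  finally show ?thesis .
qed

section \<open>The covering event\<close>

definition covered_error ::
    "nat \<Rightarrow> nat \<Rightarrow> nat \<Rightarrow> nat \<Rightarrow> (nat \<Rightarrow> 'a::field) set list \<Rightarrow> (nat \<Rightarrow> nat \<Rightarrow> 'a) \<Rightarrow> bool" where
  "covered_error m eta l w Fs E \<longleftrightarrow> wt_SR m eta l E = w \<and> (\<forall>i<l. supp_block m eta E i \<subseteq> Fs ! i)"

lemma prob_Grass_seq_covers:
  fixes E :: "nat \<Rightarrow> nat \<Rightarrow> 'a::{field,finite}"
  assumes "length vs = l" "\<And>d. d \<in> set vs \<Longrightarrow> d \<le> min m eta"
  shows "measure_pmf.prob (seq_pmf (map (\<lambda>d. pmf_of_set (Grass (min m eta) d)) vs))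
           {Fs. \<forall>i<l. supp_block m eta E i \<subseteq> Fs ! i}
         = (\<Prod>i<l. Phi CARD('a) (min m eta) (block_rank m eta E i) (vs ! i))"
  using assms
  by (simp add: prob_seq_pmf_componentwise[where A = "\<lambda>i. {F. supp_block m eta E i \<subseteq> F}", simplified]
      prob_Grass_supersets[OF subspace_supp_block supp_block_subset_Fvec dim_supp_block])

lemma prob_uniform_seq_exists_le:
  assumes "finite M" "M \<noteq> {}"
  shows "measure_pmf.prob (seq_pmf (replicate N (pmf_of_set M))) {cs. \<exists>j<length cs. P (cs ! j)}
         \<le> real N * real (card {c \<in> M. P c}) / real (card M)"
  using prob_seq_pmf_replicate_exists_le[of N "pmf_of_set M" "{c. P c}"]
    measure_pmf_of_set[OF assms(2,1), of "{c. P c}"]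
  by (simp add: Int_def)

lemma integral_card_filter:
  assumes "finite S"
  shows "(\<integral>x. real (card {s \<in> S. P s x}) \<partial>measure_pmf p) = (\<Sum>s\<in>S. measure_pmf.prob p {x. P s x})"
proof -
  have "real (card {s \<in> S. P s x}) = (\<Sum>s\<in>S. indicator {x. P s x} x)" for x
    using assms by (simp add: indicator_def of_bool_def sum.If_cases Int_def)
  then show ?thesis
    by (simp add: Bochner_Integration.integral_sum integrable_bounded_pmf[where B=1])
qed

lemma bij_betw_subtract_Mats:
  assumes "Y \<in> Mats m n"
  shows "bij_betw (\<lambda>c r j. Y r j - c r j) (Mats m n) (Mats m n :: (nat \<Rightarrow> nat \<Rightarrow> 'a::ab_group_add) set)"
  by (rule bij_betw_byWitness[where f' = "\<lambda>c r j. Y r j - c r j"]) (use assms in \<open>auto simp: Mats_def\<close>)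

lemma prob_covered_given_dims_le:
  fixes Y :: "nat \<Rightarrow> nat \<Rightarrow> 'a::{field,finite}" and m eta l :: nat
  defines "M \<equiv> Mats m (l * eta) :: (nat \<Rightarrow> nat \<Rightarrow> 'a) set"
  assumes Y: "Y \<in> M" and vs: "length vs = l" "\<And>d. d \<in> set vs \<Longrightarrow> d \<le> min m eta"
  shows "measure_pmf.prob
           (seq_pmf (map (\<lambda>d. pmf_of_set (Grass (min m eta) d)) vs) \<bind>
              (\<lambda>Fs. map_pmf (Pair Fs) (seq_pmf (replicate N (pmf_of_set M)))))
           {(Fs, cs). \<exists>j<length cs. covered_error m eta l w Fs (\<lambda>r c. Y r c - (cs ! j) r c)}
         \<le> real N / real (card M) *
           (\<Sum>E\<in>{E \<in> M. wt_SR m eta l E = w}. \<Prod>i<l. Phi CARD('a) (min m eta) (block_rank m eta E i) (vs ! i))"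
proof -
  let ?G = "seq_pmf (map (\<lambda>d. pmf_of_set (Grass (min m eta) d :: (nat \<Rightarrow> 'a) set set)) vs)"
  let ?cov = "covered_error m eta l w"
  have M: "finite M" "M \<noteq> {}" using Y by (auto simp: M_def finite_Mats)
  have "measure_pmf.prob (?G \<bind> (\<lambda>Fs. map_pmf (Pair Fs) (seq_pmf (replicate N (pmf_of_set M)))))
           {(Fs, cs). \<exists>j<length cs. ?cov Fs (\<lambda>r c. Y r c - (cs ! j) r c)}
      \<le> (\<integral>Fs. real N / real (card M) * real (card {E \<in> M. ?cov Fs E}) \<partial>?G)"
  proof (rule prob_bind_pmf_le)
    fix Fs
    have "card {c \<in> M. ?cov Fs (\<lambda>r j. Y r j - c r j)} = card {E \<in> M. ?cov Fs E}"
      using card_Collect_bij_betw[OF bij_betw_subtract_Mats[OF Y[unfolded M_def]]] by (simp add: M_def)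
    then show "measure_pmf.prob (map_pmf (Pair Fs) (seq_pmf (replicate N (pmf_of_set M))))
        {(Fs, cs). \<exists>j<length cs. ?cov Fs (\<lambda>r c. Y r c - (cs ! j) r c)}
      \<le> real N / real (card M) * real (card {E \<in> M. ?cov Fs E})"
      using prob_uniform_seq_exists_le[OF M, of N "\<lambda>c. ?cov Fs (\<lambda>r j. Y r j - c r j)"] by simp
  next
    have "real (card {E \<in> M. ?cov Fs E}) \<le> real (card M)" for Fs
      using M by (intro of_nat_mono card_mono) auto
    then show "integrable ?G (\<lambda>Fs. real N / real (card M) * real (card {E \<in> M. ?cov Fs E}))"
      by (intro Bochner_Integration.integrable_mult_right integrable_bounded_pmf[where B="real (card M)"]) simp
  qed
  also have "\<dots> = real N / real (card M) * (\<Sum>E\<in>M. measure_pmf.prob ?G {Fs. ?cov Fs E})"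
    using integral_card_filter[OF M(1), where P = "\<lambda>E Fs. ?cov Fs E" and p = ?G] by simp
  also have "(\<Sum>E\<in>M. measure_pmf.prob ?G {Fs. ?cov Fs E})
      = (\<Sum>E\<in>M. if wt_SR m eta l E = w
                   then \<Prod>i<l. Phi CARD('a) (min m eta) (block_rank m eta E i) (vs ! i) else 0)"
    by (intro sum.cong refl) (simp add: covered_error_def prob_Grass_seq_covers[OF vs])
  also have "\<dots> = (\<Sum>E\<in>{E \<in> M. wt_SR m eta l E = w}.
      \<Prod>i<l. Phi CARD('a) (min m eta) (block_rank m eta E i) (vs ! i))"
    by (rule sum.inter_filter[OF M(1), symmetric])
  finally show ?thesis .
qed

lemma integral_sum_finite_support:
  fixes F :: "'b \<Rightarrow> 'c \<Rightarrow> real"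
  assumes "set_pmf p \<subseteq> W" "finite W" "finite S"
  shows "(\<integral>x. c * (\<Sum>s\<in>S. F s x) \<partial>measure_pmf p) = c * (\<Sum>s\<in>S. \<Sum>x\<in>W. pmf p x * F s x)"
  using assms
  by (subst integral_measure_pmf_real[OF assms(2)])
     (auto simp: sum_distrib_left sum_distrib_right mult_ac intro: sum.swap)

definition phi_bar :: "nat list pmf \<Rightarrow> nat \<Rightarrow> nat \<Rightarrow> nat \<Rightarrow> nat \<Rightarrow> nat list \<Rightarrow> real" where
  "phi_bar alpha q mu v l ws = (\<Sum>vs\<in>Wset v l mu. pmf alpha vs * (\<Prod>i<l. Phi q mu (ws ! i) (vs ! i)))"

lemma phi_bar_nonneg: "1 \<le> q \<Longrightarrow> 0 \<le> phi_bar alpha q mu v l ws"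
  unfolding phi_bar_def by (intro sum_nonneg mult_nonneg_nonneg prod_nonneg Phi_nonneg) auto

lemma prob_exp_dist_le:
  fixes Y :: "nat \<Rightarrow> nat \<Rightarrow> 'a::{field,finite}" and m eta l :: nat
  defines "M \<equiv> Mats m (l * eta) :: (nat \<Rightarrow> nat \<Rightarrow> 'a) set"
  assumes alpha: "set_pmf alpha \<subseteq> Wset v l (min m eta)" and Y: "Y \<in> M"
  shows "measure_pmf.prob (exp_dist alpha (min m eta) m (l * eta) N)
           {(Fs, cs). \<exists>j<length cs. covered_error m eta l w Fs (\<lambda>r c. Y r c - (cs ! j) r c)}
         \<le> real N / real (card M) * (\<Sum>E\<in>{E \<in> M. wt_SR m eta l E = w}.
              phi_bar alpha CARD('a) (min m eta) v l (rank_profile m eta l E))"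
proof -
  let ?Phis = "\<lambda>E vs. \<Prod>i<l. Phi CARD('a) (min m eta) (block_rank m eta E i) (vs ! i)"
  have finite_Mw: "finite {E \<in> M. wt_SR m eta l E = w}" by (simp add: M_def finite_Mats)
  have "measure_pmf.prob (exp_dist alpha (min m eta) m (l * eta) N)
           {(Fs, cs). \<exists>j<length cs. covered_error m eta l w Fs (\<lambda>r c. Y r c - (cs ! j) r c)}
      \<le> (\<integral>vs. real N / real (card M) * (\<Sum>E\<in>{E \<in> M. wt_SR m eta l E = w}. ?Phis E vs) \<partial>alpha)"
    unfolding exp_dist_def map_pmf_def[symmetric] M_def
    using alpha Y[unfolded M_def] finite_subset[OF alpha finite_Wset]
    by (intro prob_bind_pmf_le prob_covered_given_dims_le integrable_measure_pmf_finite)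
       (auto simp: Wset_def)
  also have "\<dots> = real N / real (card M) * (\<Sum>E\<in>{E \<in> M. wt_SR m eta l E = w}.
      phi_bar alpha CARD('a) (min m eta) v l (rank_profile m eta l E))"
    unfolding integral_sum_finite_support[OF alpha finite_Wset finite_Mw]
    by (simp add: phi_bar_def rank_profile_def mult_ac)
  finally show ?thesis .
qed

lemma NM_nonneg: "1 < q \<Longrightarrow> r \<le> m \<Longrightarrow> r \<le> eta \<Longrightarrow> 0 \<le> NM q m eta r"
  unfolding NM_def
  by (intro prod_nonneg divide_nonneg_pos mult_nonneg_nonneg) (auto simp: power_strict_increasing)

lemma prod_NM_nonneg:
  assumes "1 < q" "ws \<in> Wset w l (min m eta)"
  shows "0 \<le> (\<Prod>i<l. NM q m eta (ws ! i))"
proof -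
  have "ws ! i \<le> min m eta" if "i < l" for i
    using that assms(2) nth_mem[of i ws] by (auto simp: Wset_def)
  then show ?thesis by (intro prod_nonneg NM_nonneg[OF assms(1)]) auto
qed

lemma codeword_ratio_le:
  assumes "1 < q"
  shows "real (q ^ (m * k) - 1) / real (q ^ (m * n)) \<le> real q powi (int m * (int k - int n))"
proof -
  have "real q powi (int m * (int k - int n)) = real q ^ (m * k) / real q ^ (m * n)"
    using assms by (simp add: algebra_simps power_int_diff flip: of_nat_mult)
  moreover have "real (q ^ (m * k) - 1) \<le> real q ^ (m * k)" by (simp add: of_nat_diff)
  ultimately show ?thesis using assms by (simp add: divide_right_mono)
qed

theorem mainTheorem4:
  fixes alpha :: "nat list pmf" and Y :: "nat \<Rightarrow> nat \<Rightarrow> 'a::{field,finite}"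
    and m eta l k w v :: nat
  defines "q \<equiv> CARD('a)"
  defines "n \<equiv> l * eta"
  defines "mu \<equiv> min m eta"
  assumes "m \<ge> 1" "eta \<ge> 1" "l \<ge> 1" "k \<ge> 1"
    and "w \<le> v" "v \<le> l * mu"
    and "set_pmf alpha \<subseteq> Wset v l mu"
    and "Y \<in> Mats m n"
  shows "measure_pmf.prob (exp_dist alpha mu m n (q ^ (m * k) - 1))
           {(Fs, cs). \<exists>j < length cs.
              (let E = (\<lambda>r c. Y r c - (cs ! j) r c) in
                 wt_SR m eta l E = w \<and> (\<forall>i<l. supp_block m eta E i \<subseteq> Fs ! i))}
         \<le> real q powi (int m * (int k - int n)) *
           (\<Sum>ws\<in>Wset w l mu.
              (\<Sum>vs\<in>Wset v l mu. pmf alpha vs * (\<Prod>i<l. Phi q mu (ws ! i) (vs ! i)))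
              * (\<Prod>i<l. NM q m eta (ws ! i)))"
proof -
  let ?M = "Mats m n :: (nat \<Rightarrow> nat \<Rightarrow> 'a) set"
  let ?ratio = "real (q ^ (m * k) - 1) / real (card ?M)"
  let ?bound = "\<Sum>ws\<in>Wset w l mu. phi_bar alpha q mu v l ws * (\<Prod>i<l. NM q m eta (ws ! i))"
  have q: "1 < q" unfolding q_def by (rule one_less_card_field)
  have "measure_pmf.prob (exp_dist alpha mu m n (q ^ (m * k) - 1))
           {(Fs, cs). \<exists>j<length cs. covered_error m eta l w Fs (\<lambda>r c. Y r c - (cs ! j) r c)}
      \<le> ?ratio * (\<Sum>E\<in>{E \<in> ?M. wt_SR m eta l E = w}. phi_bar alpha q mu v l (rank_profile m eta l E))"
    using prob_exp_dist_le[OF \<open>set_pmf alpha \<subseteq> Wset v l mu\<close>[unfolded mu_def] \<open>Y \<in> Mats m n\<close>[unfolded n_def]]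
    unfolding q_def n_def mu_def .
  also have "\<dots> \<le> ?ratio * ?bound"
    unfolding n_def mu_def q_def
    by (intro mult_left_mono sum_weight_class_le phi_bar_nonneg) simp_all
  also have "\<dots> \<le> real q powi (int m * (int k - int n)) * ?bound"
    using codeword_ratio_le[OF q] q
    by (intro mult_right_mono sum_nonneg mult_nonneg_nonneg phi_bar_nonneg prod_NM_nonneg)
       (auto simp: card_Mats q_def mu_def)
  finally show ?thesis by (simp add: covered_error_def Let_def phi_bar_def)
qed

end
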